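(* Let $\mathcal G$ be a doubly connected molecular graph and let $b_0$ be a redundant blue solid edge of $\mathcal G$. Let $b$ be a diffusive edge of $\mathcal G$ joining molecules $\mathcal M_1$ and $\mathcal M_2$, and let $\mathcal M$ be another molecule of $\mathcal G$ (distinct from $\mathcal M_1,\mathcal M_2$). Form a new graph by removing $b$ and adding two diffusive edges, $b_1$ joining $\mathcal M_1$ and $\mathcal M$ and $b_2$ joining $\mathcal M$ and $\mathcal M_2$. Then $b_0$ is still redundant in the new graph.
   Context: A molecular graph is a finite multigraph whose vertices are called molecules and each of whose edges joins two distinct molecules and is either a diffusive edge or a blue solid edge (parallel edges are allowed). A molecular graph is doubly connected if there exist two disjoint sets of edges, $\mathcal B_{black}$ consisting only of diffusive edges and $\mathcal B_{blue}$ consisting only of blue solid or diffusive edges, such that each of $\mathcal B_{black}$ and $\mathcal B_{blue}$ contains a spanning tree of the set of all molecules. A blue solid edge $e$ of a doubly connected graph is redundant if the graph obtained by deleting $e$ is still doubly connected. *)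

theory Defs
  imports Main
begin

datatype edge_kind = Diffusive | BlueSolid

definition joins :: "('e \<Rightarrow> 'v \<times> 'v) \<Rightarrow> 'e \<Rightarrow> 'v \<Rightarrow> 'v \<Rightarrow> bool" where
  "joins ends e u v \<longleftrightarrow> ends e = (u, v) \<or> ends e = (v, u)"

definition molecular_graph :: "'v set \<Rightarrow> 'e set \<Rightarrow> ('e \<Rightarrow> 'v \<times> 'v) \<Rightarrow> bool" where
  "molecular_graph V E ends \<longleftrightarrow> finite V \<and> finite E \<and>
     (\<forall>e\<in>E. fst (ends e) \<in> V \<and> snd (ends e) \<in> V \<and> fst (ends e) \<noteq> snd (ends e))"

definition adj :: "'e set \<Rightarrow> ('e \<Rightarrow> 'v \<times> 'v) \<Rightarrow> 'v \<Rightarrow> 'v \<Rightarrow> bool" where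
  "adj F ends u v \<longleftrightarrow> (\<exists>e\<in>F. joins ends e u v)"

definition connects :: "'v set \<Rightarrow> 'e set \<Rightarrow> ('e \<Rightarrow> 'v \<times> 'v) \<Rightarrow> bool" where
  "connects V F ends \<longleftrightarrow> (\<forall>u\<in>V. \<forall>v\<in>V. (adj F ends)\<^sup>*\<^sup>* u v)"

definition spanning_tree :: "'v set \<Rightarrow> 'e set \<Rightarrow> ('e \<Rightarrow> 'v \<times> 'v) \<Rightarrow> bool" where
  "spanning_tree V T ends \<longleftrightarrow> connects V T ends \<and> (\<forall>e\<in>T. \<not> connects V (T - {e}) ends)"

definition contains_spanning_tree :: "'v set \<Rightarrow> 'e set \<Rightarrow> ('e \<Rightarrow> 'v \<times> 'v) \<Rightarrow> bool" where
  "contains_spanning_tree V F ends \<longleftrightarrow> (\<exists>T\<subseteq>F. spanning_tree V T ends)"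

definition doubly_connected ::
  "'v set \<Rightarrow> 'e set \<Rightarrow> ('e \<Rightarrow> 'v \<times> 'v) \<Rightarrow> ('e \<Rightarrow> edge_kind) \<Rightarrow> bool" where
  "doubly_connected V E ends kind \<longleftrightarrow>
     (\<exists>Bblack Bblue. Bblack \<subseteq> E \<and> Bblue \<subseteq> E \<and> Bblack \<inter> Bblue = {} \<and>
        (\<forall>e\<in>Bblack. kind e = Diffusive) \<and>
        (\<forall>e\<in>Bblue. kind e = BlueSolid \<or> kind e = Diffusive) \<and>
        contains_spanning_tree V Bblack ends \<and> contains_spanning_tree V Bblue ends)"

definition redundant ::
  "'v set \<Rightarrow> 'e set \<Rightarrow> ('e \<Rightarrow> 'v \<times> 'v) \<Rightarrow> ('e \<Rightarrow> edge_kind) \<Rightarrow> 'e \<Rightarrow> bool" where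
  "redundant V E ends kind e \<longleftrightarrow> e \<in> E \<and> kind e = BlueSolid \<and>
     doubly_connected V E ends kind \<and> doubly_connected V (E - {e}) ends kind"

end

theory Submission
  imports Defs
begin

text \<open>Subdividing the diffusive edge \<open>b\<close> into the path \<open>M1 \<midarrow> M \<midarrow> M2\<close> preserves connectivity of
  every edge set: wherever \<open>b\<close> was used, the two new edges are used instead. The edge \<open>b\<close> lies
  in at most one of the two disjoint connecting sets witnessing double connectivity, and the new
  edges are diffusive, so double connectivity survives the subdivision. Applying this both to
  \<open>\<G>\<close> and to \<open>\<G>\<close> without \<open>b\<^sub>0\<close> (note \<open>b\<^sub>0 \<noteq> b\<close>, as \<open>b\<^sub>0\<close> is blue solid) shows that \<open>b\<^sub>0\<close> stays
  redundant.\<close>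

lemma connects_if_edges_connected:
  assumes "connects V F ends"
    and "\<And>e u v. e \<in> F \<Longrightarrow> joins ends e u v \<Longrightarrow> (adj F' ends')\<^sup>*\<^sup>* u v"
  shows "connects V F' ends'"
proof -
  have "adj F ends \<le> (adj F' ends')\<^sup>*\<^sup>*"
    using assms(2) unfolding adj_def by blast
  then have "(adj F ends)\<^sup>*\<^sup>* \<le> ((adj F' ends')\<^sup>*\<^sup>*)\<^sup>*\<^sup>*"
    by (rule rtranclp_mono)
  then have "(adj F ends)\<^sup>*\<^sup>* \<le> (adj F' ends')\<^sup>*\<^sup>*"
    by simp
  then show ?thesis
    using assms(1) unfolding connects_def by blast
qed

lemma connects_mono:
  assumes "connects V T ends" and "T \<subseteq> F"
  shows "connects V F ends"
proof (rule connects_if_edges_connected[OF assms(1)])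
  fix e u v
  assume "e \<in> T" "joins ends e u v"
  then have "adj F ends u v"
    using assms(2) unfolding adj_def by blast
  then show "(adj F ends)\<^sup>*\<^sup>* u v" ..
qed

lemma contains_spanning_tree_iff_connects:
  assumes "finite F"
  shows "contains_spanning_tree V F ends \<longleftrightarrow> connects V F ends"
proof
  show "contains_spanning_tree V F ends \<Longrightarrow> connects V F ends"
    unfolding contains_spanning_tree_def spanning_tree_def using connects_mono by blast
  show "connects V F ends \<Longrightarrow> contains_spanning_tree V F ends"
    using assms
  proof (induction "card F" arbitrary: F rule: less_induct)
    case less
    show ?case
    proof (cases "spanning_tree V F ends")
      case True
      then show ?thesis unfolding contains_spanning_tree_def by blast
    next
      case False
      then obtain e where e: "e \<in> F" "connects V (F - {e}) ends"
        using less.prems unfolding spanning_tree_def by blast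
      have "card (F - {e}) < card F"
        using e less.prems by (meson card_Diff1_less)
      then have "contains_spanning_tree V (F - {e}) ends"
        using less e by auto
      then show ?thesis unfolding contains_spanning_tree_def by blast
    qed
  qed
qed

lemma doubly_connected_iff_connects:
  assumes "finite E"
  shows "doubly_connected V E ends kind \<longleftrightarrow>
     (\<exists>Bblack Bblue. Bblack \<subseteq> E \<and> Bblue \<subseteq> E \<and> Bblack \<inter> Bblue = {} \<and>
        (\<forall>e\<in>Bblack. kind e = Diffusive) \<and>
        (\<forall>e\<in>Bblue. kind e = BlueSolid \<or> kind e = Diffusive) \<and>
        connects V Bblack ends \<and> connects V Bblue ends)"
proof -
  have "contains_spanning_tree V B ends \<longleftrightarrow> connects V B ends" if "B \<subseteq> E" for B
    using contains_spanning_tree_iff_connects finite_subset[OF that assms] by blast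
  then show ?thesis
    unfolding doubly_connected_def by meson
qed

definition subdivide :: "'e \<Rightarrow> 'e \<Rightarrow> 'e \<Rightarrow> 'e set \<Rightarrow> 'e set" where
  "subdivide b b1 b2 S = (if b \<in> S then S - {b} \<union> {b1, b2} else S)"

lemma connects_subdivide:
  assumes "connects V S ends" and "joins ends b M1 M2"
    and "b1 \<notin> S" and "b2 \<notin> S" and "b1 \<noteq> b2"
  shows "connects V (subdivide b b1 b2 S) (ends(b1 := (M1, M), b2 := (M, M2)))"
proof (rule connects_if_edges_connected[OF assms(1)])
  fix e u v
  assume e: "e \<in> S" "joins ends e u v"
  let ?S = "subdivide b b1 b2 S"
  let ?ends = "ends(b1 := (M1, M), b2 := (M, M2))"
  show "(adj ?S ?ends)\<^sup>*\<^sup>* u v"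
  proof (cases "e = b")
    case True
    have "adj ?S ?ends M1 M" "adj ?S ?ends M M1" "adj ?S ?ends M M2" "adj ?S ?ends M2 M"
      using True e assms(5) by (auto simp: subdivide_def adj_def joins_def)
    moreover have "(u = M1 \<and> v = M2) \<or> (u = M2 \<and> v = M1)"
      using True e assms(2) by (auto simp: joins_def)
    ultimately show ?thesis
      by (meson converse_rtranclp_into_rtranclp r_into_rtranclp)
  next
    case False
    then have "adj ?S ?ends u v"
      using e assms(3,4) by (auto simp: subdivide_def adj_def joins_def)
    then show ?thesis by blast
  qed
qed

lemma doubly_connected_subdivide:
  assumes "finite E" and "doubly_connected V E ends kind"
    and "kind b = Diffusive" and "joins ends b M1 M2"
    and "b1 \<notin> E" and "b2 \<notin> E" and "b1 \<noteq> b2"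
  shows "doubly_connected V (subdivide b b1 b2 E) (ends(b1 := (M1, M), b2 := (M, M2)))
           (kind(b1 := Diffusive, b2 := Diffusive))"
proof -
  let ?ends = "ends(b1 := (M1, M), b2 := (M, M2))"
  let ?kind = "kind(b1 := Diffusive, b2 := Diffusive)"
  let ?sub = "subdivide b b1 b2"
  obtain Bk Bu where B: "Bk \<subseteq> E" "Bu \<subseteq> E" "Bk \<inter> Bu = {}"
    "\<forall>e\<in>Bk. kind e = Diffusive" "\<forall>e\<in>Bu. kind e = BlueSolid \<or> kind e = Diffusive"
    "connects V Bk ends" "connects V Bu ends"
    using assms(2) unfolding doubly_connected_iff_connects[OF assms(1)] by blast
  have "connects V (?sub Bk) ?ends" "connects V (?sub Bu) ?ends"
    using connects_subdivide[OF B(6) assms(4)] connects_subdivide[OF B(7) assms(4)]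
      B(1,2) assms(5-7) by blast+
  moreover have "?sub Bk \<subseteq> ?sub E" "?sub Bu \<subseteq> ?sub E" "?sub Bk \<inter> ?sub Bu = {}"
    using B(1-3) assms(5,6) by (auto simp: subdivide_def)
  moreover have "\<forall>e\<in>?sub Bk. ?kind e = Diffusive"
    "\<forall>e\<in>?sub Bu. ?kind e = BlueSolid \<or> ?kind e = Diffusive"
    using B(4,5) by (auto simp: subdivide_def)
  moreover have "finite (?sub E)"
    using assms(1) by (simp add: subdivide_def)
  ultimately show ?thesis
    using doubly_connected_iff_connects[of "?sub E"] by blast
qed

theorem claimA2:
  fixes V :: "'v set" and E :: "'e set" and ends :: "'e \<Rightarrow> 'v \<times> 'v"
    and kind :: "'e \<Rightarrow> edge_kind" and b0 b b1 b2 :: 'e and M1 M2 M :: 'v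
  assumes "molecular_graph V E ends"
    and "doubly_connected V E ends kind"
    and "redundant V E ends kind b0"
    and "b \<in> E" and "kind b = Diffusive" and "joins ends b M1 M2"
    and "M \<in> V" and "M \<noteq> M1" and "M \<noteq> M2"
    and "b1 \<notin> E" and "b2 \<notin> E" and "b1 \<noteq> b2"
  shows "redundant V ((E - {b}) \<union> {b1, b2})
           (ends(b1 := (M1, M), b2 := (M, M2)))
           (kind(b1 := Diffusive, b2 := Diffusive)) b0"
proof -
  have fin: "finite E"
    using assms(1) unfolding molecular_graph_def by blast
  have b0: "b0 \<in> E" "kind b0 = BlueSolid" "doubly_connected V (E - {b0}) ends kind"
    using assms(3) unfolding redundant_def by auto
  have b0_fresh: "b0 \<noteq> b" "b0 \<noteq> b1" "b0 \<noteq> b2"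
    using b0 assms(5,10,11) by auto
  have "subdivide b b1 b2 E = E - {b} \<union> {b1, b2}"
    "subdivide b b1 b2 (E - {b0}) = (E - {b} \<union> {b1, b2}) - {b0}"
    using assms(4) b0_fresh by (auto simp: subdivide_def)
  moreover have "doubly_connected V (subdivide b b1 b2 E) (ends(b1 := (M1, M), b2 := (M, M2)))
      (kind(b1 := Diffusive, b2 := Diffusive))"
    "doubly_connected V (subdivide b b1 b2 (E - {b0})) (ends(b1 := (M1, M), b2 := (M, M2)))
      (kind(b1 := Diffusive, b2 := Diffusive))"
    using doubly_connected_subdivide[OF fin assms(2,5,6,10-12)]
      doubly_connected_subdivide[OF _ b0(3) assms(5,6)] fin assms(10-12) by auto
  ultimately show ?thesis
    unfolding redundant_def using b0 b0_fresh by auto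
qed

end
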